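(* Let $E$ be a Banach space and $P$ a metric space. For $\mu\in P$ and $\lambda>0$ let $\{R^{(\mu,\lambda)}(t,s)\}_{t\geq s\geq0}$ be evolution systems on $E$ such that (H4) there are $M\geq1$, $\omega\in\mathbb{R}$ with $\|R^{(\mu,\lambda)}(t,s)\|\leq Me^{\omega(t-s)}$ for all $\mu,\lambda$ and $0\leq s\leq t$; and (H5) there are $C_0$ semigroups $\{\widehat S^{(\mu)}(t)\}_{t\geq0}$, $\mu\in P$, on $E$ such that for any $t\geq0$, $s\in[0,t]$, $\mu\in P$, $\bar u\in E$, $\lim_{\lambda\to0^+,\ \bar v\to\bar u,\ \nu\to\mu}R^{(\nu,\lambda)}(t,s)\bar v=\widehat S^{(\mu)}(t-s)\bar u$, uniformly for $t,s$ from bounded intervals. Let $(T_n)$ in $(0,+\infty)$, $(k_n)$ positive integers, $(\lambda_n)$ in $(0,+\infty)$, $(\mu_n)$ in $P$ be such that $T_n\to+\infty$, $k_n\to\infty$, $\lambda_n\to0$, $k_n\lambda_nT_n\to t$ for some $t>0$, $\mu_n\to\mu_0\in P$, and $k_n\lambda_nT_n\leq t$ for almost all $n$. Then for any continuous $w:[0,t]\to E$, $\lambda_nT_n\sum_{k=0}^{k_n-1}R^{(\mu_n,\lambda_n)}(k_n\lambda_nT_n,k\lambda_nT_n)w(k\lambda_nT_n)\to\int_0^t\widehat S^{(\mu_0)}(t-s)w(s)\,ds$ as $n\to+\infty$.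
   Context: An evolution system on $E$ is a family $\{R(t,s)\}_{t\geq s\geq 0}$ of bounded linear operators with $R(t,t)=I$, $R(t,s)R(s,r)=R(t,r)$ for $t\geq s\geq r\geq 0$, and $(s,t)\mapsto R(t,s)\bar u$ continuous for each $\bar u\in E$. *)

theory Defs
  imports "HOL-Analysis.Analysis"
begin

text \<open>An evolution system on E: family R(t,s), t >= s >= 0, of bounded linear operators
  (here given as a total function of (t,s), only its values on t >= s >= 0 matter).\<close>
definition evolution_system :: "(real \<Rightarrow> real \<Rightarrow> ('a::banach \<Rightarrow>\<^sub>L 'a)) \<Rightarrow> bool" where
  "evolution_system R \<longleftrightarrow>
     (\<forall>t\<ge>0. R t t = id_blinfun) \<and>
     (\<forall>t s r. 0 \<le> r \<and> r \<le> s \<and> s \<le> t \<longrightarrow> R t s o\<^sub>L R s r = R t r) \<and>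
     (\<forall>u. continuous_on {(s, t). 0 \<le> s \<and> s \<le> t} (\<lambda>(s, t). blinfun_apply (R t s) u))"

definition C0_semigroup :: "(real \<Rightarrow> ('a::banach \<Rightarrow>\<^sub>L 'a)) \<Rightarrow> bool" where
  "C0_semigroup S \<longleftrightarrow>
     S 0 = id_blinfun \<and>
     (\<forall>t s. 0 \<le> t \<and> 0 \<le> s \<longrightarrow> S (t + s) = S t o\<^sub>L S s) \<and>
     (\<forall>u. ((\<lambda>t. blinfun_apply (S t) u) \<longlongrightarrow> u) (at_right 0))"

end

theory Submission
  imports Defs
begin

text \<open>
  By (H5) and compactness of [0, t], the summands R(\<mu>n, \<lambda>n; \<tau>n, s) w(s), 0 \<le> s \<le> \<tau>n,
  where \<tau>n = kn \<lambda>n Tn, become uniformly close to S(\<mu>0; t - s) w(s). Since \<tau>n \<le> t, the sum is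
  then close to the left Riemann sum with mesh \<lambda>n Tn \<rightarrow> 0 of the continuous integrand
  s \<mapsto> S(\<mu>0; t - s) w(s), which converges to the integral. The integrand is continuous because
  the orbits of S(\<mu>0) are uniform limits of orbits of the evolution systems, and (H4) bounds
  S(\<mu>0) on [0, t].
\<close>

definition evolution_limit_semigroup ::
  "('p::metric_space \<Rightarrow> real \<Rightarrow> real \<Rightarrow> real \<Rightarrow> ('a::banach \<Rightarrow>\<^sub>L 'a)) \<Rightarrow> ('p \<Rightarrow> real \<Rightarrow> ('a \<Rightarrow>\<^sub>L 'a)) \<Rightarrow> bool"
  where "evolution_limit_semigroup R S \<longleftrightarrow>
    (\<forall>\<mu> u Tb \<epsilon>. \<epsilon> > 0 \<longrightarrow> (\<exists>\<delta>>0. \<forall>\<nu> l v t s.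
       0 < l \<and> l < \<delta> \<and> dist v u < \<delta> \<and> dist \<nu> \<mu> < \<delta> \<and> 0 \<le> s \<and> s \<le> t \<and> t \<le> Tb
       \<longrightarrow> norm (blinfun_apply (R \<nu> l t s) v - blinfun_apply (S \<mu> (t - s)) u) < \<epsilon>))"

lemma evolution_limit_semigroup_sequentially:
  assumes lim: "evolution_limit_semigroup R S"
    and l: "l \<longlonglongrightarrow> 0" "\<And>m. l m > 0" and \<nu>: "\<nu> \<longlonglongrightarrow> \<mu>" and v: "v \<longlonglongrightarrow> u"
    and st: "\<And>m. 0 \<le> s m \<and> s m \<le> t m \<and> t m \<le> Tb"
  shows "(\<lambda>m. blinfun_apply (R (\<nu> m) (l m) (t m) (s m)) (v m) - blinfun_apply (S \<mu> (t m - s m)) u)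
           \<longlonglongrightarrow> 0"
proof (rule tendstoI)
  fix \<epsilon> :: real assume "\<epsilon> > 0"
  then obtain \<delta> where "\<delta> > 0" and \<delta>: "\<forall>\<nu> l v t s.
       0 < l \<and> l < \<delta> \<and> dist v u < \<delta> \<and> dist \<nu> \<mu> < \<delta> \<and> 0 \<le> s \<and> s \<le> t \<and> t \<le> Tb
       \<longrightarrow> norm (blinfun_apply (R \<nu> l t s) v - blinfun_apply (S \<mu> (t - s)) u) < \<epsilon>"
    using lim unfolding evolution_limit_semigroup_def by blast
  have "\<forall>\<^sub>F m in sequentially. l m < \<delta> \<and> dist (v m) u < \<delta> \<and> dist (\<nu> m) \<mu> < \<delta>"
    using order_tendstoD(2)[OF l(1) \<open>\<delta> > 0\<close>] tendstoD[OF v \<open>\<delta> > 0\<close>] tendstoD[OF \<nu> \<open>\<delta> > 0\<close>]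
    by eventually_elim auto
  then show "\<forall>\<^sub>F m in sequentially.
      dist (blinfun_apply (R (\<nu> m) (l m) (t m) (s m)) (v m) - blinfun_apply (S \<mu> (t m - s m)) u) 0 < \<epsilon>"
    by eventually_elim (use \<delta> l(2) st in auto)
qed

lemma semigroup_orbit_continuous:
  assumes evol: "\<And>l. l > 0 \<Longrightarrow> evolution_system (R \<mu> l)"
    and lim: "evolution_limit_semigroup R S"
  shows "continuous_on {0..Tb} (\<lambda>r. blinfun_apply (S \<mu> r) u)"
proof (rule uniform_limit_theorem[where F="at_right 0" and f="\<lambda>l r. blinfun_apply (R \<mu> l r 0) u"])
  show "\<forall>\<^sub>F l in at_right 0. continuous_on {0..Tb} (\<lambda>r. blinfun_apply (R \<mu> l r 0) u)"
    using eventually_at_right_less[of "0::real"]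
  proof eventually_elim
    case (elim l)
    have "continuous_on {(s, t). 0 \<le> s \<and> s \<le> t} (\<lambda>(s, t). blinfun_apply (R \<mu> l t s) u)"
      using evol[OF elim] unfolding evolution_system_def by blast
    then have "continuous_on {0..Tb} ((\<lambda>(s, t). blinfun_apply (R \<mu> l t s) u) \<circ> (\<lambda>r. (0, r)))"
      by (intro continuous_on_compose continuous_intros) (auto elim: continuous_on_subset)
    then show ?case by (simp add: o_def)
  qed
  show "uniform_limit {0..Tb} (\<lambda>l r. blinfun_apply (R \<mu> l r 0) u) (\<lambda>r. blinfun_apply (S \<mu> r) u) (at_right 0)"
    unfolding uniform_limit_iff
  proof (intro allI impI)
    fix \<epsilon> :: real assume "\<epsilon> > 0"
    then obtain \<delta> where "\<delta> > 0" and \<delta>: "\<forall>\<nu> l v t s.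
       0 < l \<and> l < \<delta> \<and> dist v u < \<delta> \<and> dist \<nu> \<mu> < \<delta> \<and> 0 \<le> s \<and> s \<le> t \<and> t \<le> Tb
       \<longrightarrow> norm (blinfun_apply (R \<nu> l t s) v - blinfun_apply (S \<mu> (t - s)) u) < \<epsilon>"
      using lim unfolding evolution_limit_semigroup_def by blast
    show "\<forall>\<^sub>F l in at_right 0. \<forall>r\<in>{0..Tb}. dist (blinfun_apply (R \<mu> l r 0) u) (blinfun_apply (S \<mu> r) u) < \<epsilon>"
      unfolding eventually_at_right_field
      using \<open>\<delta> > 0\<close> \<delta>[rule_format, of _ u \<mu> 0] by (intro exI[of _ \<delta>]) (auto simp: dist_norm)
  qed
qed simp

lemma semigroup_norm_bound:
  assumes lim: "evolution_limit_semigroup R S"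
    and bound: "\<And>l t s. l > 0 \<Longrightarrow> 0 \<le> s \<Longrightarrow> s \<le> t \<Longrightarrow> norm (R \<mu> l t s) \<le> M * exp (\<omega> * (t - s))"
    and "r \<ge> 0"
  shows "norm (S \<mu> r) \<le> M * exp (\<omega> * r)"
proof (rule norm_blinfun_bound)
  show "0 \<le> M * exp (\<omega> * r)"
    using order.trans[OF norm_ge_zero bound[of 1 r r]] \<open>r \<ge> 0\<close> by simp
  fix u
  define l :: "nat \<Rightarrow> real" where "l m = inverse (Suc m)" for m
  have "(\<lambda>m. blinfun_apply (R \<mu> (l m) r 0) u - blinfun_apply (S \<mu> (r - 0)) u) \<longlonglongrightarrow> 0"
    using \<open>r \<ge> 0\<close> unfolding l_def
    by (intro evolution_limit_semigroup_sequentially[OF lim] LIMSEQ_inverse_real_of_nat) auto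
  then have "(\<lambda>m. blinfun_apply (R \<mu> (l m) r 0) u) \<longlonglongrightarrow> blinfun_apply (S \<mu> r) u"
    by (simp add: Lim_null[symmetric])
  moreover have "norm (blinfun_apply (R \<mu> (l m) r 0) u) \<le> M * exp (\<omega> * r) * norm u" for m
    using norm_blinfun[of "R \<mu> (l m) r 0" u] bound[of "l m" 0 r] \<open>r \<ge> 0\<close>
    by (auto simp: l_def intro: order.trans[OF _ mult_right_mono])
  ultimately show "norm (blinfun_apply (S \<mu> r) u) \<le> M * exp (\<omega> * r) * norm u"
    by (intro tendsto_le[OF _ tendsto_const tendsto_norm]) auto
qed

lemma continuous_on_blinfun_apply_bounded:
  fixes A :: "'x::metric_space \<Rightarrow> 'a::real_normed_vector \<Rightarrow>\<^sub>L 'b::real_normed_vector"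
  assumes orbit: "\<And>u. continuous_on X (\<lambda>x. blinfun_apply (A x) u)"
    and bound: "\<And>x. x \<in> X \<Longrightarrow> norm (A x) \<le> B"
    and w: "continuous_on X w"
  shows "continuous_on X (\<lambda>x. blinfun_apply (A x) (w x))"
  unfolding continuous_on_def
proof
  fix x0 assume "x0 \<in> X"
  let ?F = "at x0 within X"
  have "((\<lambda>x. blinfun_apply (A x) (w x - w x0)) \<longlongrightarrow> 0) ?F"
  proof (rule Lim_null_comparison)
    show "\<forall>\<^sub>F x in ?F. norm (blinfun_apply (A x) (w x - w x0)) \<le> B * norm (w x - w x0)"
      by (auto simp: eventually_at_filter intro!: always_eventually
          order.trans[OF norm_blinfun mult_right_mono] bound)
    have "(w \<longlongrightarrow> w x0) ?F"
      using w \<open>x0 \<in> X\<close> unfolding continuous_on_def by blast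
    then show "((\<lambda>x. B * norm (w x - w x0)) \<longlongrightarrow> 0) ?F"
      by (intro tendsto_mult_right_zero tendsto_norm_zero) (simp add: Lim_null[symmetric])
  qed
  moreover have "((\<lambda>x. blinfun_apply (A x) (w x0)) \<longlongrightarrow> blinfun_apply (A x0) (w x0)) ?F"
    using orbit \<open>x0 \<in> X\<close> unfolding continuous_on_def by blast
  ultimately have "((\<lambda>x. blinfun_apply (A x) (w x - w x0) + blinfun_apply (A x) (w x0))
      \<longlongrightarrow> 0 + blinfun_apply (A x0) (w x0)) ?F"
    by (rule tendsto_add)
  then show "((\<lambda>x. blinfun_apply (A x) (w x)) \<longlongrightarrow> blinfun_apply (A x0) (w x0)) ?F"
    by (simp add: blinfun.diff_right)
qed

lemma semigroup_convolution_integrand_continuous: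
  assumes evol: "\<And>l. l > 0 \<Longrightarrow> evolution_system (R \<mu> l)"
    and lim: "evolution_limit_semigroup R S"
    and bound: "\<And>l t s. l > 0 \<Longrightarrow> 0 \<le> s \<Longrightarrow> s \<le> t \<Longrightarrow> norm (R \<mu> l t s) \<le> M * exp (\<omega> * (t - s))"
    and w: "continuous_on {0..b} w"
  shows "continuous_on {0..b} (\<lambda>s. blinfun_apply (S \<mu> (b - s)) (w s))"
proof (rule continuous_on_blinfun_apply_bounded[OF _ _ w])
  show "continuous_on {0..b} (\<lambda>s. blinfun_apply (S \<mu> (b - s)) u)" for u
    by (rule continuous_on_compose2[OF semigroup_orbit_continuous[OF evol lim]])
      (auto intro!: continuous_intros)
  show "norm (S \<mu> (b - s)) \<le> \<bar>M\<bar> * exp (\<bar>\<omega>\<bar> * b)" if "s \<in> {0..b}" for s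
  proof -
    have "norm (S \<mu> (b - s)) \<le> M * exp (\<omega> * (b - s))"
      using that by (intro semigroup_norm_bound[OF lim bound]) auto
    also have "\<dots> \<le> \<bar>M\<bar> * exp (\<omega> * (b - s))"
      by (simp add: mult_right_mono)
    also have "\<omega> * (b - s) \<le> \<bar>\<omega>\<bar> * b"
      using that mult_right_mono[OF abs_ge_self[of \<omega>], of "b - s"] mult_left_mono[of "b - s" b "\<bar>\<omega>\<bar>"]
      by auto
    then have "\<bar>M\<bar> * exp (\<omega> * (b - s)) \<le> \<bar>M\<bar> * exp (\<bar>\<omega>\<bar> * b)"
      by (simp add: mult_left_mono)
    finally show ?thesis .
  qed
qed

lemma eventually_uniformly_small_if_sequentially:
  fixes H :: "nat \<Rightarrow> 'x::metric_space \<Rightarrow> 'y::real_normed_vector"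
  assumes "compact K"
    and seq: "\<And>r x x0. strict_mono r \<Longrightarrow> (\<And>m. D (r m) \<subseteq> K \<and> x m \<in> D (r m)) \<Longrightarrow>
                x \<longlonglongrightarrow> x0 \<Longrightarrow> x0 \<in> K \<Longrightarrow> (\<lambda>m. H (r m) (x m)) \<longlonglongrightarrow> 0"
    and "\<epsilon> > 0"
  shows "\<forall>\<^sub>F n in sequentially. D n \<subseteq> K \<longrightarrow> (\<forall>x\<in>D n. norm (H n x) < \<epsilon>)"
proof (rule ccontr)
  assume "\<not> ?thesis"
  from not_eventually_sequentiallyD[OF this] obtain r :: "nat \<Rightarrow> nat" where r: "strict_mono r"
    and "\<forall>m. \<not> (D (r m) \<subseteq> K \<longrightarrow> (\<forall>x\<in>D (r m). norm (H (r m) x) < \<epsilon>))"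
    by blast
  then have "\<forall>m. \<exists>x. D (r m) \<subseteq> K \<and> x \<in> D (r m) \<and> norm (H (r m) x) \<ge> \<epsilon>"
    by (auto simp: not_less)
  then obtain x where x: "\<And>m. D (r m) \<subseteq> K \<and> x m \<in> D (r m) \<and> norm (H (r m) (x m)) \<ge> \<epsilon>"
    by metis
  then obtain x0 r' where "x0 \<in> K" and r': "strict_mono r'" and "(x \<circ> r') \<longlonglongrightarrow> x0"
    using compact_imp_seq_compact[OF \<open>compact K\<close>] unfolding seq_compact_def by blast
  then have "(\<lambda>m. H ((r \<circ> r') m) ((x \<circ> r') m)) \<longlonglongrightarrow> 0"
    using x by (intro seq strict_mono_o r r') (auto simp: o_def)
  then have "\<forall>\<^sub>F m in sequentially. norm (H (r (r' m)) (x (r' m))) < \<epsilon>"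
    by (auto dest: tendstoD[OF _ \<open>\<epsilon> > 0\<close>] simp: o_def)
  then show False
    using x by (auto dest: eventually_happens' simp: not_less[symmetric])
qed

lemma left_riemann_sum_error:
  fixes f :: "real \<Rightarrow> 'a::banach"
  assumes cont: "continuous_on {0..b} f" and "h > 0" and "real n * h \<le> b"
    and modulus: "\<And>x y. x \<in> {0..b} \<Longrightarrow> y \<in> {0..b} \<Longrightarrow> \<bar>x - y\<bar> \<le> h \<Longrightarrow> norm (f x - f y) \<le> \<epsilon>"
  shows "norm (h *\<^sub>R (\<Sum>j<n. f (real j * h)) - integral {0..real n * h} f) \<le> \<epsilon> * (real n * h)"
  using \<open>real n * h \<le> b\<close>
proof (induction n)
  case 0
  show ?case by simp
next
  case (Suc n)
  define a where "a = real n * h"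
  have a: "0 \<le> a" "a \<le> a + h" "a + h \<le> b" "real (Suc n) * h = a + h"
    using Suc.prems \<open>h > 0\<close> by (auto simp: a_def algebra_simps)
  have integrable: "f integrable_on {c..d}" if "0 \<le> c" "d \<le> b" for c d
    using that by (intro integrable_continuous_interval continuous_on_subset[OF cont]) auto
  have "norm (integral {a..a + h} (\<lambda>x. f a - f x)) \<le> \<epsilon> * (a + h - a)"
    using a by (intro integral_bound continuous_intros continuous_on_subset[OF cont] modulus) auto
  moreover have "integral {a..a + h} (\<lambda>x. f a - f x) = h *\<^sub>R f a - integral {a..a + h} f"
    using a by (subst integral_diff) (auto intro: integrable)
  ultimately have step: "norm (h *\<^sub>R f a - integral {a..a + h} f) \<le> \<epsilon> * h"
    by simp
  have "integral {0..a + h} f = integral {0..a} f + integral {a..a + h} f"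
    using a by (intro Henstock_Kurzweil_Integration.integral_combine[symmetric] integrable) auto
  moreover have "h *\<^sub>R (\<Sum>j<Suc n. f (real j * h)) = h *\<^sub>R (\<Sum>j<n. f (real j * h)) + h *\<^sub>R f a"
    by (simp add: a_def scaleR_add_right)
  ultimately have "h *\<^sub>R (\<Sum>j<Suc n. f (real j * h)) - integral {0..real (Suc n) * h} f
      = (h *\<^sub>R (\<Sum>j<n. f (real j * h)) - integral {0..a} f) + (h *\<^sub>R f a - integral {a..a + h} f)"
    unfolding a(4) by simp
  also have "norm \<dots> \<le> \<epsilon> * a + \<epsilon> * h"
    using Suc.IH a(3,4) step \<open>h > 0\<close> unfolding a_def by (intro norm_triangle_le add_mono) auto
  also have "\<dots> = \<epsilon> * (real (Suc n) * h)"
    by (simp only: a(4) distrib_left)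
  finally show ?case .
qed

lemma left_riemann_sum_tendsto_integral:
  fixes f :: "real \<Rightarrow> 'a::banach"
  assumes cont: "continuous_on {0..b} f" and h: "h \<longlonglongrightarrow> 0" "\<And>n. h n > 0"
    and kh: "(\<lambda>n. real (k n) * h n) \<longlonglongrightarrow> b" "\<forall>\<^sub>F n in sequentially. real (k n) * h n \<le> b"
  shows "(\<lambda>n. h n *\<^sub>R (\<Sum>j<k n. f (real j * h n))) \<longlonglongrightarrow> integral {0..b} f"
proof -
  have kh_in: "\<forall>\<^sub>F n in sequentially. real (k n) * h n \<in> {0..b}"
    using kh(2) by eventually_elim (use h(2) in \<open>auto intro!: mult_nonneg_nonneg simp: less_imp_le\<close>)
  have "(\<lambda>n. h n *\<^sub>R (\<Sum>j<k n. f (real j * h n)) - integral {0..real (k n) * h n} f) \<longlonglongrightarrow> 0"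
  proof (rule tendstoI)
    fix e :: real assume "e > 0"
    define \<epsilon> where "\<epsilon> = e / (\<bar>b\<bar> + 1)"
    have "\<epsilon> > 0" "\<epsilon> * \<bar>b\<bar> < e"
      using \<open>e > 0\<close> by (auto simp: \<epsilon>_def field_simps)
    obtain d where "d > 0" and d: "\<And>x y. x \<in> {0..b} \<Longrightarrow> y \<in> {0..b} \<Longrightarrow> dist x y < d \<Longrightarrow> dist (f x) (f y) < \<epsilon>"
      using compact_uniformly_continuous[OF cont compact_Icc] \<open>\<epsilon> > 0\<close>
      unfolding uniformly_continuous_on_def by metis
    from kh(2) kh_in order_tendstoD(2)[OF h(1) \<open>d > 0\<close>]
    show "\<forall>\<^sub>F n in sequentially.
        dist (h n *\<^sub>R (\<Sum>j<k n. f (real j * h n)) - integral {0..real (k n) * h n} f) 0 < e"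
    proof eventually_elim
      case (elim n)
      have "norm (h n *\<^sub>R (\<Sum>j<k n. f (real j * h n)) - integral {0..real (k n) * h n} f)
          \<le> \<epsilon> * (real (k n) * h n)"
        using elim d h(2) \<open>\<epsilon> > 0\<close>
        by (intro left_riemann_sum_error[OF cont]) (auto simp: dist_real_def dist_norm less_imp_le)
      also have "\<dots> \<le> \<epsilon> * \<bar>b\<bar>"
        using elim \<open>\<epsilon> > 0\<close> by (intro mult_left_mono) auto
      finally show ?case
        using \<open>\<epsilon> * \<bar>b\<bar> < e\<close> by simp
    qed
  qed
  moreover have "(\<lambda>n. integral {0..real (k n) * h n} f) \<longlonglongrightarrow> integral {0..b} f"
  proof (rule continuous_on_tendsto_compose[OF indefinite_integral_continuous_1 kh(1) _ kh_in])
    show "f integrable_on {0..b}"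
      by (rule integrable_continuous_interval[OF cont])
    show "b \<in> {0..b}"
      using kh_in by (auto simp: eventually_sequentially)
  qed
  ultimately show ?thesis
    by (auto dest: tendsto_add)
qed

lemma scaled_sum_tendsto_zero:
  fixes g :: "nat \<Rightarrow> nat \<Rightarrow> 'a::real_normed_vector"
  assumes small: "\<And>\<epsilon>. \<epsilon> > 0 \<Longrightarrow> \<forall>\<^sub>F n in sequentially. \<forall>j<k n. norm (g n j) \<le> \<epsilon>"
    and "\<And>n. h n \<ge> 0" and kh: "\<forall>\<^sub>F n in sequentially. real (k n) * h n \<le> b"
  shows "(\<lambda>n. h n *\<^sub>R (\<Sum>j<k n. g n j)) \<longlonglongrightarrow> 0"
proof (rule tendstoI)
  fix e :: real assume "e > 0"
  define \<epsilon> where "\<epsilon> = e / (\<bar>b\<bar> + 1)"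
  have "\<epsilon> > 0" "\<epsilon> * \<bar>b\<bar> < e"
    using \<open>e > 0\<close> by (auto simp: \<epsilon>_def field_simps)
  from small[OF \<open>\<epsilon> > 0\<close>] kh show "\<forall>\<^sub>F n in sequentially. dist (h n *\<^sub>R (\<Sum>j<k n. g n j)) 0 < e"
  proof eventually_elim
    case (elim n)
    have "norm (\<Sum>j<k n. g n j) \<le> (\<Sum>j<k n. \<epsilon>)"
      using elim(1) by (intro sum_norm_le) auto
    then have "norm (h n *\<^sub>R (\<Sum>j<k n. g n j)) \<le> h n * (\<Sum>j<k n. \<epsilon>)"
      using \<open>h n \<ge> 0\<close> by (simp add: mult_left_mono)
    also have "\<dots> = \<epsilon> * (real (k n) * h n)"
      by simp
    also have "\<dots> \<le> \<epsilon> * \<bar>b\<bar>"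
      using elim(2) \<open>\<epsilon> > 0\<close> by (intro mult_left_mono) auto
    finally show ?case
      using \<open>\<epsilon> * \<bar>b\<bar> < e\<close> by simp
  qed
qed

lemma evolution_uniformly_close_to_semigroup:
  fixes R :: "'p::metric_space \<Rightarrow> real \<Rightarrow> real \<Rightarrow> real \<Rightarrow> ('a::banach \<Rightarrow>\<^sub>L 'a)"
  assumes lim: "evolution_limit_semigroup R S"
    and orbit: "\<And>u. continuous_on {0..b} (\<lambda>r. blinfun_apply (S \<mu> r) u)"
    and integrand: "continuous_on {0..b} (\<lambda>s. blinfun_apply (S \<mu> (b - s)) (w s))"
    and w: "continuous_on {0..b} w"
    and l: "l \<longlonglongrightarrow> 0" "\<And>n. l n > 0" and \<nu>: "\<nu> \<longlonglongrightarrow> \<mu>" and \<tau>: "\<tau> \<longlonglongrightarrow> b"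
    and "\<epsilon> > 0"
  shows "\<forall>\<^sub>F n in sequentially. \<tau> n \<le> b \<longrightarrow> (\<forall>s\<in>{0..\<tau> n}.
           norm (blinfun_apply (R (\<nu> n) (l n) (\<tau> n) s) (w s) - blinfun_apply (S \<mu> (b - s)) (w s)) < \<epsilon>)"
proof -
  let ?H = "\<lambda>n s. blinfun_apply (R (\<nu> n) (l n) (\<tau> n) s) (w s) - blinfun_apply (S \<mu> (b - s)) (w s)"
  have "\<forall>\<^sub>F n in sequentially. {0..\<tau> n} \<subseteq> {0..b} \<longrightarrow> (\<forall>s\<in>{0..\<tau> n}. norm (?H n s) < \<epsilon>)"
  proof (rule eventually_uniformly_small_if_sequentially[OF compact_Icc _ \<open>\<epsilon> > 0\<close>])
    fix r :: "nat \<Rightarrow> nat" and s :: "nat \<Rightarrow> real" and s0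
    assume r: "strict_mono r" and s: "\<And>m. {0..\<tau> (r m)} \<subseteq> {0..b} \<and> s m \<in> {0..\<tau> (r m)}"
      and "s \<longlonglongrightarrow> s0" and "s0 \<in> {0..b}"
    have s_le: "0 \<le> s m \<and> s m \<le> \<tau> (r m) \<and> \<tau> (r m) \<le> b" for m
      using s[of m] by auto
    have \<tau>_s: "(\<lambda>m. \<tau> (r m) - s m) \<longlonglongrightarrow> b - s0"
      using LIMSEQ_subseq_LIMSEQ[OF \<tau> r] \<open>s \<longlonglongrightarrow> s0\<close> by (intro tendsto_diff) (auto simp: o_def)
    have "(\<lambda>m. w (s m)) \<longlonglongrightarrow> w s0"
      using continuous_on_tendsto_compose[OF w \<open>s \<longlonglongrightarrow> s0\<close> \<open>s0 \<in> {0..b}\<close>] s_le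
      by (auto intro: always_eventually order.trans)
    then have "(\<lambda>m. blinfun_apply (R (\<nu> (r m)) (l (r m)) (\<tau> (r m)) (s m)) (w (s m))
        - blinfun_apply (S \<mu> (\<tau> (r m) - s m)) (w s0)) \<longlonglongrightarrow> 0"
      using LIMSEQ_subseq_LIMSEQ[OF l(1) r] LIMSEQ_subseq_LIMSEQ[OF \<nu> r] l(2) s_le
      by (intro evolution_limit_semigroup_sequentially[OF lim]) (auto simp: o_def)
    moreover have "(\<lambda>m. blinfun_apply (S \<mu> (\<tau> (r m) - s m)) (w s0)) \<longlonglongrightarrow> blinfun_apply (S \<mu> (b - s0)) (w s0)"
    proof (intro continuous_on_tendsto_compose[OF orbit \<tau>_s] always_eventually allI)
      show "b - s0 \<in> {0..b}" "\<tau> (r m) - s m \<in> {0..b}" for m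
        using s_le[of m] \<open>s0 \<in> {0..b}\<close> by auto
    qed
    moreover have "(\<lambda>m. blinfun_apply (S \<mu> (b - s m)) (w (s m))) \<longlonglongrightarrow> blinfun_apply (S \<mu> (b - s0)) (w s0)"
      using continuous_on_tendsto_compose[OF integrand \<open>s \<longlonglongrightarrow> s0\<close> \<open>s0 \<in> {0..b}\<close>] s_le
      by (auto intro: always_eventually order.trans)
    ultimately have "(\<lambda>m. (blinfun_apply (R (\<nu> (r m)) (l (r m)) (\<tau> (r m)) (s m)) (w (s m))
        - blinfun_apply (S \<mu> (\<tau> (r m) - s m)) (w s0))
        + (blinfun_apply (S \<mu> (\<tau> (r m) - s m)) (w s0) - blinfun_apply (S \<mu> (b - s m)) (w (s m))))
        \<longlonglongrightarrow> 0 + (blinfun_apply (S \<mu> (b - s0)) (w s0) - blinfun_apply (S \<mu> (b - s0)) (w s0))"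
      by (intro tendsto_add tendsto_diff)
    then show "(\<lambda>m. ?H (r m) (s m)) \<longlonglongrightarrow> 0"
      by simp
  qed
  then show ?thesis
    by eventually_elim auto
qed

theorem lemma2p5:
  fixes R :: "'p::metric_space \<Rightarrow> real \<Rightarrow> real \<Rightarrow> real \<Rightarrow> ('a::banach \<Rightarrow>\<^sub>L 'a)"
    and S :: "'p \<Rightarrow> real \<Rightarrow> ('a \<Rightarrow>\<^sub>L 'a)"
    and M \<omega> t :: real
    and T lam :: "nat \<Rightarrow> real" and k :: "nat \<Rightarrow> nat" and mu :: "nat \<Rightarrow> 'p" and mu0 :: 'p
    and w :: "real \<Rightarrow> 'a"
  assumes evol: "\<And>\<mu> l. l > 0 \<Longrightarrow> evolution_system (R \<mu> l)"
    and H4_M: "M \<ge> 1"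
    and H4: "\<And>\<mu> l t s. l > 0 \<Longrightarrow> 0 \<le> s \<Longrightarrow> s \<le> t \<Longrightarrow> norm (R \<mu> l t s) \<le> M * exp (\<omega> * (t - s))"
    and H5_S: "\<And>\<mu>. C0_semigroup (S \<mu>)"
    and H5: "\<And>\<mu> u Tb \<epsilon>. \<epsilon> > 0 \<Longrightarrow> \<exists>\<delta>>0. \<forall>\<nu> l v t s.
              0 < l \<and> l < \<delta> \<and> dist v u < \<delta> \<and> dist \<nu> \<mu> < \<delta> \<and> 0 \<le> s \<and> s \<le> t \<and> t \<le> Tb
              \<longrightarrow> norm (blinfun_apply (R \<nu> l t s) v - blinfun_apply (S \<mu> (t - s)) u) < \<epsilon>"
    and T_pos: "\<And>n. T n > 0" and k_pos: "\<And>n. k n > 0" and lam_pos: "\<And>n. lam n > 0"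
    and T_lim: "filterlim T at_top sequentially"
    and k_lim: "filterlim k at_top sequentially"
    and lam_lim: "lam \<longlonglongrightarrow> 0"
    and t_pos: "t > 0"
    and klT_lim: "(\<lambda>n. real (k n) * lam n * T n) \<longlonglongrightarrow> t"
    and mu_lim: "mu \<longlonglongrightarrow> mu0"
    and klT_le: "eventually (\<lambda>n. real (k n) * lam n * T n \<le> t) sequentially"
    and w_cont: "continuous_on {0..t} w"
  shows "(\<lambda>n. (lam n * T n) *\<^sub>R
            (\<Sum>j<k n. blinfun_apply (R (mu n) (lam n) (real (k n) * lam n * T n) (real j * lam n * T n))
                         (w (real j * lam n * T n))))
         \<longlonglongrightarrow> integral {0..t} (\<lambda>s. blinfun_apply (S mu0 (t - s)) (w s))"
proof -
  have lim: "evolution_limit_semigroup R S"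
    using H5 unfolding evolution_limit_semigroup_def by blast
  have orbit: "continuous_on {0..t} (\<lambda>r. blinfun_apply (S mu0 r) u)" for u
    by (rule semigroup_orbit_continuous[OF evol lim])
  define f where "f s = blinfun_apply (S mu0 (t - s)) (w s)" for s
  have f_cont: "continuous_on {0..t} f"
    unfolding f_def by (rule semigroup_convolution_integrand_continuous[OF evol lim H4 w_cont])
  define h where "h n = lam n * T n" for n
  have kh: "(\<lambda>n. real (k n) * h n) \<longlonglongrightarrow> t" "\<forall>\<^sub>F n in sequentially. real (k n) * h n \<le> t"
    using klT_lim klT_le by (simp_all add: h_def mult.assoc)
  have h_pos: "h n > 0" for n
    using lam_pos T_pos by (simp add: h_def)
  have "(\<lambda>n. real (k n) * h n / real (k n)) \<longlonglongrightarrow> 0"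
    by (intro tendsto_divide_0[OF kh(1)] filterlim_at_top_imp_at_infinity
        filterlim_compose[OF filterlim_real_sequentially k_lim])
  then have h_lim: "h \<longlonglongrightarrow> 0"
    using k_pos by simp
  have close: "\<forall>\<^sub>F n in sequentially. \<forall>j<k n.
      norm (blinfun_apply (R (mu n) (lam n) (real (k n) * h n) (real j * h n)) (w (real j * h n))
            - f (real j * h n)) \<le> \<epsilon>" if "\<epsilon> > 0" for \<epsilon>
    using evolution_uniformly_close_to_semigroup[OF lim orbit f_cont[unfolded f_def] w_cont
        lam_lim lam_pos mu_lim kh(1) that] kh(2)
  proof eventually_elim
    case (elim n)
    have "real j * h n \<in> {0..real (k n) * h n}" if "j < k n" for j
      using that h_pos[of n] by (auto intro: mult_right_mono)
    then show ?case
      using elim by (auto simp: f_def less_imp_le)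
  qed
  have "(\<lambda>n. h n *\<^sub>R (\<Sum>j<k n. blinfun_apply (R (mu n) (lam n) (real (k n) * h n) (real j * h n))
        (w (real j * h n)) - f (real j * h n))) \<longlonglongrightarrow> 0"
    using h_pos by (intro scaled_sum_tendsto_zero[OF close _ kh(2)]) (simp_all add: less_imp_le)
  moreover have "(\<lambda>n. h n *\<^sub>R (\<Sum>j<k n. f (real j * h n))) \<longlonglongrightarrow> integral {0..t} f"
    by (rule left_riemann_sum_tendsto_integral[OF f_cont h_lim h_pos kh])
  ultimately have "(\<lambda>n. h n *\<^sub>R (\<Sum>j<k n. blinfun_apply (R (mu n) (lam n) (real (k n) * h n) (real j * h n))
        (w (real j * h n)) - f (real j * h n)) + h n *\<^sub>R (\<Sum>j<k n. f (real j * h n)))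
      \<longlonglongrightarrow> 0 + integral {0..t} f"
    by (rule tendsto_add)
  then show ?thesis
    by (simp add: h_def f_def[abs_def] mult.assoc sum_subtractf scaleR_diff_right)
qed

end
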